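(* The tropical Zariski topology on $\mathbb{R}^n$, whose closed sets are the congruence varieties $\boldsymbol{V}(E)$ for congruences $E$ on $\overline{\boldsymbol{T}(X_1,\ldots,X_n)}$, coincides with the Euclidean topology on $\mathbb{R}^n$.
   Context: $\boldsymbol{T}=\mathbb{R}\cup\{-\infty\}$ with $a\oplus b=\max\{a,b\}$, $a\odot b=a+b$. $\overline{\boldsymbol{T}[X_1,\ldots,X_n]}$ is the tropical polynomial semiring modulo identifying polynomials defining the same function $\boldsymbol{T}^n\to\boldsymbol{T}$; it is cancellative and $\overline{\boldsymbol{T}(X_1,\ldots,X_n)}$ is its semifield of fractions. Each element defines a function $\mathbb{R}^n\to\boldsymbol{T}$ (quotients evaluated as differences). A congruence is an equivalence relation compatible with $\oplus$ and $\odot$; $\boldsymbol{V}(E)=\{x\in\mathbb{R}^n\mid f(x)=g(x)\ \forall(f,g)\in E\}$. (These sets are closed under arbitrary intersections and finite unions and include $\varnothing$ and $\mathbb{R}^n$, so they form the closed sets of a topology.) *)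

theory Defs
  imports "HOL-Analysis.Analysis"
begin

text \<open>Tropical semiring T = reals with -infinity, modelled inside ereal
(only -infinity and finite values ever occur). Points of R^n are of type real^'n.\<close>

text \<open>A tropical polynomial is a finite set of monomials (exponent vector, real coefficient);
the empty set is the tropical zero polynomial -infinity.\<close>
definition trop_eval :: "(('n::finite \<Rightarrow> nat) \<times> real) set \<Rightarrow> real^'n \<Rightarrow> ereal" where
  "trop_eval P x = (SUP m\<in>P. ereal (snd m + (\<Sum>i\<in>UNIV. real (fst m i) * x $ i)))"

text \<open>Elements of the semifield of fractions of the polynomial function semiring, identified with
the functions R^n -> T they define: f/g evaluated as f(x) - g(x), with g a nonzero polynomial.\<close>
definition trop_frac :: "(real^'n::finite \<Rightarrow> ereal) set" where
  "trop_frac = {(\<lambda>x. trop_eval P x - trop_eval Q x) | P Q. finite P \<and> finite Q \<and> Q \<noteq> {}}"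

definition trop_congruence :: "('a \<Rightarrow> ereal) set \<Rightarrow> (('a \<Rightarrow> ereal) \<times> ('a \<Rightarrow> ereal)) set \<Rightarrow> bool" where
  "trop_congruence S E \<longleftrightarrow> equiv S E \<and>
     (\<forall>(a,b)\<in>E. \<forall>(c,d)\<in>E.
        ((\<lambda>x. max (a x) (c x)), (\<lambda>x. max (b x) (d x))) \<in> E \<and>
        ((\<lambda>x. a x + c x), (\<lambda>x. b x + d x)) \<in> E)"

definition trop_V :: "((real^'n::finite \<Rightarrow> ereal) \<times> (real^'n \<Rightarrow> ereal)) set \<Rightarrow> (real^'n) set" where
  "trop_V E = {x. \<forall>(f,g)\<in>E. f x = g x}"

end

theory Submission
  imports Defs
begin

text \<open>Every element of the semifield of fractions is either constantly \<open>-\<infinity>\<close> or a difference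
of two maxima of finitely many affine functions, hence continuous; so every congruence variety
is Euclidean-closed. Conversely, a closed set \<open>A\<close> is the variety of the congruence of all pairs of
fractions that agree on \<open>A\<close>: for \<open>x \<notin> A\<close> choose \<open>r > 0\<close> such that every point of \<open>A\<close> has
sup-distance at least \<open>r\<close> from \<open>x\<close>; the fractions \<open>max r d\<close> and \<open>d\<close>, where
\<open>d y = max\<^sub>i max (y\<^sub>i - x\<^sub>i) (x\<^sub>i - y\<^sub>i)\<close>, agree on \<open>A\<close> but not at \<open>x\<close>.\<close>

lemma Max_add_Times:
  fixes f g :: "_ \<Rightarrow> 'a::linordered_ab_semigroup_add"
  assumes "finite A" "A \<noteq> {}" "finite B" "B \<noteq> {}"
  shows "Max ((\<lambda>(a, b). f a + g b) ` (A \<times> B)) = Max (f ` A) + Max (g ` B)"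
proof (rule antisym)
  show "Max ((\<lambda>(a, b). f a + g b) ` (A \<times> B)) \<le> Max (f ` A) + Max (g ` B)"
    using assms by (auto intro!: add_mono)
next
  have "Max (f ` A) \<in> f ` A" "Max (g ` B) \<in> g ` B"
    using assms by simp_all
  then obtain a b where "a \<in> A" "Max (f ` A) = f a" "b \<in> B" "Max (g ` B) = g b"
    by blast
  then show "Max (f ` A) + Max (g ` B) \<le> Max ((\<lambda>(a, b). f a + g b) ` (A \<times> B))"
    using assms by (intro Max_ge) force+
qed

lemma ereal_diff_add_diff:
  fixes a b c d :: ereal
  assumes "a \<noteq> \<infinity>" "c \<noteq> \<infinity>" "\<bar>b\<bar> \<noteq> \<infinity>" "\<bar>d\<bar> \<noteq> \<infinity>"
  shows "(a - b) + (c - d) = (a + c) - (b + d)"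
  using assms by (cases a; cases b; cases c; cases d) auto

lemma ereal_max_diff_diff:
  fixes a b c d :: ereal
  assumes "a \<noteq> \<infinity>" "c \<noteq> \<infinity>" "\<bar>b\<bar> \<noteq> \<infinity>" "\<bar>d\<bar> \<noteq> \<infinity>"
  shows "max (a - b) (c - d) = max (a + d) (c + b) - (b + d)"
  using assms by (cases a; cases b; cases c; cases d) (auto simp: max_def)

lemma norm_le_card_mult_Max_abs_cart:
  fixes x :: "real^'n::finite"
  shows "norm x \<le> real CARD('n) * (MAX i. \<bar>x $ i\<bar>)"
proof -
  have "norm x \<le> (\<Sum>i\<in>UNIV. \<bar>x $ i\<bar>)"
    by (rule norm_le_l1_cart)
  also have "\<dots> \<le> (\<Sum>i\<in>(UNIV::'n set). MAX j. \<bar>x $ j\<bar>)"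
    by (intro sum_mono Max_ge) auto
  finally show ?thesis
    by simp
qed

definition monomial_eval :: "(('n::finite \<Rightarrow> nat) \<times> real) \<Rightarrow> real^'n \<Rightarrow> real" where
  "monomial_eval m y = snd m + (\<Sum>i\<in>UNIV. real (fst m i) * y $ i)"

definition poly_mult ::
  "(('n \<Rightarrow> nat) \<times> real) set \<Rightarrow> (('n \<Rightarrow> nat) \<times> real) set \<Rightarrow> (('n \<Rightarrow> nat) \<times> real) set" where
  "poly_mult P Q = (\<lambda>(p, q). (\<lambda>i. fst p i + fst q i, snd p + snd q)) ` (P \<times> Q)"

lemma monomial_eval_mult:
  "monomial_eval (\<lambda>i. fst p i + fst q i, snd p + snd q) y = monomial_eval p y + monomial_eval q y"
  unfolding monomial_eval_def by (simp add: algebra_simps sum.distrib)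

lemma monomial_eval_const: "monomial_eval (\<lambda>_. 0, c) y = c"
  by (simp add: monomial_eval_def)

lemma monomial_eval_coordinate: "monomial_eval (\<lambda>j. if j = i then 1 else 0, c) y = c + y $ i"
proof -
  have "(\<Sum>j\<in>UNIV. real (if j = i then 1 else 0) * y $ j) = (\<Sum>j\<in>UNIV. if j = i then y $ j else 0)"
    by (intro sum.cong) auto
  then show ?thesis
    by (simp add: monomial_eval_def)
qed

lemma continuous_on_monomial_eval: "continuous_on UNIV (monomial_eval m)"
  unfolding monomial_eval_def by (intro continuous_intros)

lemma continuous_on_Max_monomial_eval:
  assumes "finite P" "P \<noteq> {}"
  shows "continuous_on UNIV (\<lambda>y. MAX m\<in>P. monomial_eval m y)"
  using assms
proof (induction P rule: finite_ne_induct)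
  case (singleton m)
  then show ?case
    by (simp add: continuous_on_monomial_eval)
next
  case (insert m P)
  then show ?case
    by (simp add: continuous_on_monomial_eval continuous_on_max)
qed

lemma trop_eval_empty: "trop_eval {} y = -\<infinity>"
  unfolding trop_eval_def by (simp add: bot_ereal_def)

lemma trop_eval_eq_Max:
  assumes "finite P" "P \<noteq> {}"
  shows "trop_eval P y = ereal (MAX m\<in>P. monomial_eval m y)"
  using assms unfolding trop_eval_def monomial_eval_def
  by (simp add: cSup_eq_Max mono_Max_commute[of ereal] mono_def image_image)

lemma trop_eval_singleton: "trop_eval {m} y = ereal (monomial_eval m y)"
  by (simp add: trop_eval_eq_Max)

lemma trop_eval_ne_PInf: "finite P \<Longrightarrow> trop_eval P y \<noteq> \<infinity>"
  by (cases "P = {}") (auto simp: trop_eval_empty trop_eval_eq_Max)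

lemma trop_eval_finite: "finite P \<Longrightarrow> P \<noteq> {} \<Longrightarrow> \<bar>trop_eval P y\<bar> \<noteq> \<infinity>"
  by (auto simp: trop_eval_eq_Max)

lemma trop_eval_union: "trop_eval (P \<union> Q) y = max (trop_eval P y) (trop_eval Q y)"
  unfolding trop_eval_def by (simp add: SUP_union sup_max)

lemma trop_eval_poly_mult:
  assumes "finite P" "finite Q"
  shows "trop_eval (poly_mult P Q) y = trop_eval P y + trop_eval Q y"
proof (cases "P = {} \<or> Q = {}")
  case True
  then show ?thesis
    using trop_eval_ne_PInf[OF assms(1), of y] trop_eval_ne_PInf[OF assms(2), of y]
    by (auto simp: poly_mult_def trop_eval_empty)
next
  case False
  have "(\<lambda>m. monomial_eval m y) ` poly_mult P Q
      = (\<lambda>(p, q). monomial_eval p y + monomial_eval q y) ` (P \<times> Q)"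
    unfolding poly_mult_def image_image by (simp add: case_prod_beta monomial_eval_mult)
  then show ?thesis
    using assms False by (simp add: trop_eval_eq_Max Max_add_Times poly_mult_def)
qed

lemma finite_poly_mult: "finite P \<Longrightarrow> finite Q \<Longrightarrow> finite (poly_mult P Q)"
  by (simp add: poly_mult_def)

lemma poly_mult_nonempty: "P \<noteq> {} \<Longrightarrow> Q \<noteq> {} \<Longrightarrow> poly_mult P Q \<noteq> {}"
  by (simp add: poly_mult_def)

lemma trop_fracE:
  assumes "f \<in> trop_frac"
  obtains P Q where "f = (\<lambda>x. trop_eval P x - trop_eval Q x)" "finite P" "finite Q" "Q \<noteq> {}"
  using assms unfolding trop_frac_def by auto

lemma trop_frac_add:
  assumes "f \<in> trop_frac" "g \<in> trop_frac"
  shows "(\<lambda>x. f x + g x) \<in> trop_frac"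
proof -
  obtain P Q where f: "f = (\<lambda>x. trop_eval P x - trop_eval Q x)" "finite P" "finite Q" "Q \<noteq> {}"
    using assms(1) by (rule trop_fracE)
  obtain P' Q' where g: "g = (\<lambda>x. trop_eval P' x - trop_eval Q' x)" "finite P'" "finite Q'" "Q' \<noteq> {}"
    using assms(2) by (rule trop_fracE)
  have "(\<lambda>x. f x + g x) = (\<lambda>x. trop_eval (poly_mult P P') x - trop_eval (poly_mult Q Q') x)"
    using f g by (intro ext)
      (simp add: trop_eval_poly_mult trop_eval_ne_PInf trop_eval_finite ereal_diff_add_diff)
  moreover have "finite (poly_mult P P')" "finite (poly_mult Q Q')" "poly_mult Q Q' \<noteq> {}"
    using f g by (simp_all add: finite_poly_mult poly_mult_nonempty)
  ultimately show ?thesis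
    unfolding trop_frac_def by blast
qed

lemma trop_frac_max:
  assumes "f \<in> trop_frac" "g \<in> trop_frac"
  shows "(\<lambda>x. max (f x) (g x)) \<in> trop_frac"
proof -
  obtain P Q where f: "f = (\<lambda>x. trop_eval P x - trop_eval Q x)" "finite P" "finite Q" "Q \<noteq> {}"
    using assms(1) by (rule trop_fracE)
  obtain P' Q' where g: "g = (\<lambda>x. trop_eval P' x - trop_eval Q' x)" "finite P'" "finite Q'" "Q' \<noteq> {}"
    using assms(2) by (rule trop_fracE)
  have "(\<lambda>x. max (f x) (g x))
      = (\<lambda>x. trop_eval (poly_mult P Q' \<union> poly_mult P' Q) x - trop_eval (poly_mult Q Q') x)"
    using f g by (intro ext)
      (simp add: trop_eval_union trop_eval_poly_mult trop_eval_ne_PInf trop_eval_finite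
        ereal_max_diff_diff)
  moreover have "finite (poly_mult P Q' \<union> poly_mult P' Q)" "finite (poly_mult Q Q')"
    "poly_mult Q Q' \<noteq> {}"
    using f g by (simp_all add: finite_poly_mult poly_mult_nonempty)
  ultimately show ?thesis
    unfolding trop_frac_def by blast
qed

lemma trop_frac_monomial_quotient:
  "(\<lambda>y. ereal (monomial_eval p y - monomial_eval q y)) \<in> trop_frac"
  unfolding trop_frac_def
  by (rule CollectI, rule exI[of _ "{p}"], rule exI[of _ "{q}"]) (simp add: trop_eval_singleton)

lemma trop_frac_const: "(\<lambda>_. ereal c) \<in> trop_frac"
  using trop_frac_monomial_quotient[of "(\<lambda>_. 0, c)" "(\<lambda>_. 0, 0)"]
  by (simp add: monomial_eval_const)

lemma trop_frac_abs_coordinate_diff: "(\<lambda>y. ereal \<bar>y $ i - c\<bar>) \<in> trop_frac"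
proof -
  define e where "e = (\<lambda>j. if j = i then 1 else 0 :: nat)"
  have "(\<lambda>y. ereal (y $ i - c)) \<in> trop_frac"
    using trop_frac_monomial_quotient[of "(e, - c)" "(\<lambda>_. 0, 0)"]
    by (simp add: e_def monomial_eval_const monomial_eval_coordinate)
  moreover have "(\<lambda>y. ereal (c - y $ i)) \<in> trop_frac"
    using trop_frac_monomial_quotient[of "(\<lambda>_. 0, c)" "(e, 0)"]
    by (simp add: e_def monomial_eval_const monomial_eval_coordinate)
  ultimately have "(\<lambda>y. max (ereal (y $ i - c)) (ereal (c - y $ i))) \<in> trop_frac"
    by (rule trop_frac_max)
  moreover have "max (ereal (y $ i - c)) (ereal (c - y $ i)) = ereal \<bar>y $ i - c\<bar>" for y
    by (simp add: max_def)
  ultimately show ?thesis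
    by simp
qed

lemma trop_frac_Max:
  assumes "finite I" "I \<noteq> {}" "\<And>i. i \<in> I \<Longrightarrow> (\<lambda>y. ereal (u i y)) \<in> trop_frac"
  shows "(\<lambda>y. ereal (MAX i\<in>I. u i y)) \<in> trop_frac"
  using assms
proof (induction I rule: finite_ne_induct)
  case (singleton i)
  then show ?case
    by simp
next
  case (insert i I)
  then show ?case
    by (simp add: trop_frac_max)
qed

lemma trop_frac_cases:
  assumes "f \<in> trop_frac"
  shows "f = (\<lambda>_. -\<infinity>) \<or> (\<exists>u. continuous_on UNIV u \<and> f = (\<lambda>y. ereal (u y)))"
proof -
  obtain P Q where f: "f = (\<lambda>x. trop_eval P x - trop_eval Q x)" "finite P" "finite Q" "Q \<noteq> {}"
    using assms by (rule trop_fracE)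
  show ?thesis
  proof (cases "P = {}")
    case True
    then show ?thesis
      using f by (auto simp: trop_eval_empty trop_eval_eq_Max)
  next
    case False
    then have "f = (\<lambda>y. ereal ((MAX m\<in>P. monomial_eval m y) - (MAX m\<in>Q. monomial_eval m y)))"
      using f by (auto simp: trop_eval_eq_Max)
    moreover have "continuous_on UNIV
        (\<lambda>y. (MAX m\<in>P. monomial_eval m y) - (MAX m\<in>Q. monomial_eval m y))"
      using f False by (intro continuous_on_diff continuous_on_Max_monomial_eval)
    ultimately show ?thesis
      by blast
  qed
qed

lemma closed_trop_frac_eq:
  assumes "f \<in> trop_frac" "g \<in> trop_frac"
  shows "closed {y. f y = g y}"
  using trop_frac_cases[OF assms(1)] trop_frac_cases[OF assms(2)]
  by (elim disjE exE conjE) (simp_all add: closed_Collect_eq)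

lemma closed_trop_V:
  assumes "E \<subseteq> trop_frac \<times> trop_frac"
  shows "closed (trop_V E)"
proof -
  have "trop_V E = (\<Inter>(f, g)\<in>E. {y. f y = g y})"
    unfolding trop_V_def by blast
  then show ?thesis
    using assms by (auto intro!: closed_INT closed_trop_frac_eq)
qed

definition trop_agree_on ::
  "(real^'n::finite) set \<Rightarrow> ((real^'n \<Rightarrow> ereal) \<times> (real^'n \<Rightarrow> ereal)) set" where
  "trop_agree_on A = {(f, g). f \<in> trop_frac \<and> g \<in> trop_frac \<and> (\<forall>y\<in>A. f y = g y)}"

lemma trop_congruence_agree_on: "trop_congruence trop_frac (trop_agree_on A)"
proof -
  have "equiv trop_frac (trop_agree_on A)"
    unfolding trop_agree_on_def equiv_def refl_on_def sym_def trans_def by auto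
  moreover have "((\<lambda>x. max (f x) (h x)), (\<lambda>x. max (g x) (k x))) \<in> trop_agree_on A"
    and "((\<lambda>x. f x + h x), (\<lambda>x. g x + k x)) \<in> trop_agree_on A"
    if "(f, g) \<in> trop_agree_on A" "(h, k) \<in> trop_agree_on A" for f g h k
    using that unfolding trop_agree_on_def by (auto intro: trop_frac_add trop_frac_max)
  ultimately show ?thesis
    unfolding trop_congruence_def by blast
qed

lemma trop_frac_separates:
  fixes A :: "(real^'n::finite) set"
  assumes "closed A" "x \<notin> A"
  obtains f g where "f \<in> trop_frac" "g \<in> trop_frac" "\<And>y. y \<in> A \<Longrightarrow> f y = g y" "f x \<noteq> g x"
proof -
  obtain e where e: "e > 0" "ball x e \<subseteq> - A"
    using assms open_contains_ball[of "- A"] by (auto simp: open_Compl)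
  define r where "r = e / real CARD('n)"
  define d where "d = (\<lambda>y. MAX i. \<bar>y $ i - x $ i\<bar>)"
  have r: "r > 0"
    using e by (simp add: r_def)
  have far: "r \<le> d y" if "y \<in> A" for y
  proof -
    have "y \<notin> ball x e"
      using e that by auto
    then have "e \<le> norm (y - x)"
      by (simp add: dist_norm norm_minus_commute)
    also have "\<dots> \<le> real CARD('n) * d y"
      using norm_le_card_mult_Max_abs_cart[of "y - x"] by (simp add: d_def)
    finally show ?thesis
      by (simp add: r_def divide_le_eq mult.commute)
  qed
  show thesis
  proof (rule that[of "\<lambda>y. max (ereal r) (ereal (d y))" "\<lambda>y. ereal (d y)"])
    show d: "(\<lambda>y. ereal (d y)) \<in> trop_frac"
      unfolding d_def by (intro trop_frac_Max trop_frac_abs_coordinate_diff) auto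
    show "(\<lambda>y. max (ereal r) (ereal (d y))) \<in> trop_frac"
      using trop_frac_const d by (rule trop_frac_max)
    show "max (ereal r) (ereal (d y)) = ereal (d y)" if "y \<in> A" for y
      using far[OF that] by simp
    show "max (ereal r) (ereal (d x)) \<noteq> ereal (d x)"
      using r by (simp add: d_def)
  qed
qed

lemma trop_V_agree_on:
  assumes "closed A"
  shows "trop_V (trop_agree_on A) = A"
proof
  show "trop_V (trop_agree_on A) \<subseteq> A"
  proof
    fix x
    assume x: "x \<in> trop_V (trop_agree_on A)"
    show "x \<in> A"
    proof (rule ccontr)
      assume "x \<notin> A"
      with assms obtain f g
        where "f \<in> trop_frac" "g \<in> trop_frac" "\<And>y. y \<in> A \<Longrightarrow> f y = g y" "f x \<noteq> g x"
        by (rule trop_frac_separates) blast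
      then have "(f, g) \<in> trop_agree_on A" "f x \<noteq> g x"
        unfolding trop_agree_on_def by blast+
      then show False
        using x unfolding trop_V_def by blast
    qed
  qed
  show "A \<subseteq> trop_V (trop_agree_on A)"
    unfolding trop_V_def trop_agree_on_def by auto
qed

theorem proposition3p9:
  shows "{trop_V E | E. trop_congruence (trop_frac :: (real^'n::finite \<Rightarrow> ereal) set) E}
         = {A :: (real^'n) set. closed A}"
proof (intro equalityI subsetI)
  fix B :: "(real^'n) set"
  assume "B \<in> {trop_V E | E. trop_congruence (trop_frac :: (real^'n::finite \<Rightarrow> ereal) set) E}"
  then obtain E where B: "B = trop_V E" and E: "trop_congruence trop_frac E"
    by blast
  from E have "equiv trop_frac E"
    unfolding trop_congruence_def by blast
  then show "B \<in> {A. closed A}"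
    using B by (simp add: closed_trop_V equiv_type)
next
  fix A :: "(real^'n) set"
  assume "A \<in> {A. closed A}"
  then have "trop_V (trop_agree_on A) = A"
    by (simp add: trop_V_agree_on)
  then show "A \<in> {trop_V E | E. trop_congruence (trop_frac :: (real^'n::finite \<Rightarrow> ereal) set) E}"
    using trop_congruence_agree_on by blast
qed

end
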